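(* Let $k\ge1$ and $n\ge0$ be integers. Every uniformly $k$-dense flag complex with at least $n(k+1)+1$ vertices is $(n,k)$-grounded.
   Context: A flag complex $X$ is uniformly $k$-dense if every vertex of $X$ is adjacent to all but at most $k$ other vertices. A simplex $\Delta$ of $X$ is a $k$-ground for $X$ if every vertex of $X$ is adjacent to all but at most $k$ vertices of $\Delta$; $X$ is $(n,k)$-grounded if it contains an $n$-simplex that is a $k$-ground for $X$. *)

theory Defs
  imports Main
begin

text \<open>A flag complex is the clique complex of a simple graph, given by a vertex set V
  and a symmetric irreflexive adjacency relation E on V.\<close>

definition simple_graph :: "'a set \<Rightarrow> ('a \<Rightarrow> 'a \<Rightarrow> bool) \<Rightarrow> bool" where
  "simple_graph V E \<longleftrightarrow> (\<forall>x y. E x y \<longrightarrow> x \<in> V \<and> y \<in> V \<and> x \<noteq> y \<and> E y x)"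

definition flag_complex :: "'a set \<Rightarrow> ('a \<Rightarrow> 'a \<Rightarrow> bool) \<Rightarrow> 'a set set" where
  "flag_complex V E = {S. S \<subseteq> V \<and> finite S \<and> S \<noteq> {} \<and> (\<forall>x\<in>S. \<forall>y\<in>S. x \<noteq> y \<longrightarrow> E x y)}"

definition is_simplex_dim :: "'a set \<Rightarrow> ('a \<Rightarrow> 'a \<Rightarrow> bool) \<Rightarrow> nat \<Rightarrow> 'a set \<Rightarrow> bool" where
  "is_simplex_dim V E n S \<longleftrightarrow> S \<in> flag_complex V E \<and> card S = n + 1"

definition uniformly_dense :: "'a set \<Rightarrow> ('a \<Rightarrow> 'a \<Rightarrow> bool) \<Rightarrow> nat \<Rightarrow> bool" where
  "uniformly_dense V E k \<longleftrightarrow> (\<forall>v\<in>V. card {w\<in>V. w \<noteq> v \<and> \<not> E v w} \<le> k)"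

definition k_ground :: "'a set \<Rightarrow> ('a \<Rightarrow> 'a \<Rightarrow> bool) \<Rightarrow> nat \<Rightarrow> 'a set \<Rightarrow> bool" where
  "k_ground V E k D \<longleftrightarrow> D \<in> flag_complex V E \<and>
     (\<forall>v\<in>V. card {w\<in>D. w \<noteq> v \<and> \<not> E v w} \<le> k)"

definition grounded :: "'a set \<Rightarrow> ('a \<Rightarrow> 'a \<Rightarrow> bool) \<Rightarrow> nat \<Rightarrow> nat \<Rightarrow> bool" where
  "grounded V E n k \<longleftrightarrow> (\<exists>D. is_simplex_dim V E n D \<and> k_ground V E k D)"

end

theory Submission
  imports Defs
begin

text \<open>A uniformly \<open>k\<close>-dense complex on at least \<open>m(k+1)+1\<close> vertices contains an
  \<open>m\<close>-simplex: pick any vertex \<open>v\<close>; discarding \<open>v\<close> and its at most \<open>k\<close> non-neighbours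
  leaves at least \<open>(m-1)(k+1)+1\<close> neighbours of \<open>v\<close>, which again span a uniformly
  \<open>k\<close>-dense complex, so induction gives an \<open>(m-1)\<close>-simplex among them to which \<open>v\<close> can
  be added.  In a uniformly \<open>k\<close>-dense complex every simplex is a \<open>k\<close>-ground, since a
  vertex has at most \<open>k\<close> non-neighbours in all of \<open>V\<close>.\<close>

lemma uniformly_dense_subset:
  assumes "uniformly_dense V E k" "finite V" "W \<subseteq> V"
  shows "uniformly_dense W E k"
  unfolding uniformly_dense_def
proof
  fix u assume "u \<in> W"
  have "card {w\<in>W. w \<noteq> u \<and> \<not> E u w} \<le> card {w\<in>V. w \<noteq> u \<and> \<not> E u w}"
    using assms(2,3) by (intro card_mono) auto
  also have "\<dots> \<le> k"
    using assms(1,3) \<open>u \<in> W\<close> unfolding uniformly_dense_def by blast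
  finally show "card {w\<in>W. w \<noteq> u \<and> \<not> E u w} \<le> k" .
qed

lemma flag_complex_insert:
  assumes "S \<in> flag_complex W E" "v \<in> V" "W \<subseteq> V" "\<forall>w\<in>W. E v w \<and> E w v"
  shows "insert v S \<in> flag_complex V E"
  using assms unfolding flag_complex_def by auto

lemma uniformly_dense_has_simplex:
  assumes "finite V" "\<forall>x y. E x y \<longrightarrow> E y x"
    and "uniformly_dense V E k" "card V \<ge> m * (k + 1) + 1"
  shows "\<exists>S. is_simplex_dim V E m S"
  using assms(1,3,4)
proof (induction m arbitrary: V)
  case 0
  then obtain v where "v \<in> V" by fastforce
  then have "is_simplex_dim V E 0 {v}"
    unfolding is_simplex_dim_def flag_complex_def by auto
  then show ?case ..
next
  case (Suc m)
  from Suc.prems(3) obtain v where v: "v \<in> V" by fastforce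
  define N where "N = {w\<in>V. w \<noteq> v \<and> \<not> E v w}"
  define W where "W = {w\<in>V. w \<noteq> v \<and> E v w}"
  have "card N \<le> k"
    using Suc.prems(2) v unfolding N_def uniformly_dense_def by blast
  have "V = insert v (N \<union> W)"
    using v unfolding N_def W_def by auto
  also have "card (insert v (N \<union> W)) \<le> Suc (card (N \<union> W))"
    by (cases "finite (N \<union> W)") (simp_all add: card_insert_if)
  also have "card (N \<union> W) \<le> card N + card W"
    by (rule card_Un_le)
  finally have "card V \<le> Suc (card N + card W)"
    by simp
  with Suc.prems(3) \<open>card N \<le> k\<close> have "card W \<ge> m * (k + 1) + 1"
    by simp
  moreover have "W \<subseteq> V" "finite W"
    using Suc.prems(1) unfolding W_def by auto
  ultimately obtain S where S: "is_simplex_dim W E m S"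
    using Suc.IH uniformly_dense_subset[OF Suc.prems(2,1)] by blast
  have "v \<notin> S"
    using S unfolding is_simplex_dim_def flag_complex_def W_def by auto
  moreover have "finite S"
    using S unfolding is_simplex_dim_def flag_complex_def by auto
  ultimately have "card (insert v S) = Suc m + 1"
    using S unfolding is_simplex_dim_def by simp
  moreover have "insert v S \<in> flag_complex V E"
    using S v \<open>W \<subseteq> V\<close> assms(2) unfolding is_simplex_dim_def W_def
    by (intro flag_complex_insert) auto
  ultimately show ?case
    unfolding is_simplex_dim_def by blast
qed

lemma uniformly_dense_simplex_is_k_ground:
  assumes "uniformly_dense V E k" "finite V" "D \<in> flag_complex V E"
  shows "k_ground V E k D"
proof -
  have "D \<subseteq> V"
    using assms(3) unfolding flag_complex_def by blast
  have "card {w\<in>D. w \<noteq> v \<and> \<not> E v w} \<le> k" if "v \<in> V" for v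
  proof -
    have "card {w\<in>D. w \<noteq> v \<and> \<not> E v w} \<le> card {w\<in>V. w \<noteq> v \<and> \<not> E v w}"
      using assms(2) \<open>D \<subseteq> V\<close> by (intro card_mono) auto
    also have "\<dots> \<le> k"
      using assms(1) that unfolding uniformly_dense_def by blast
    finally show ?thesis .
  qed
  with assms(3) show ?thesis
    unfolding k_ground_def by blast
qed

theorem lemma4p12:
  fixes V :: "'a set" and E :: "'a \<Rightarrow> 'a \<Rightarrow> bool" and n k :: nat
  assumes "simple_graph V E"
    and "finite V"
    and "k \<ge> 1"
    and "uniformly_dense V E k"
    and "card V \<ge> n * (k + 1) + 1"
  shows "grounded V E n k"
proof -
  have "\<forall>x y. E x y \<longrightarrow> E y x"
    using assms(1) unfolding simple_graph_def by blast
  then obtain D where D: "is_simplex_dim V E n D"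
    using uniformly_dense_has_simplex assms(2,4,5) by blast
  then have "k_ground V E k D"
    using uniformly_dense_simplex_is_k_ground assms(2,4)
    unfolding is_simplex_dim_def by blast
  with D show ?thesis
    unfolding grounded_def by blast
qed

end
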